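(* There are no rotational $W$-translators in $\mathrm{SL}(2,\mathbb R)$ with constant mean curvature, where $W=\frac12(x^2-y^2)\partial_x+xy\partial_y$.
   Context: $\mathrm{SL}(2,\mathbb R)$ is given global coordinates $(x,y,\theta)\in\mathbb R\times(0,\infty)\times\mathbb R$ via $(x,y,\theta)\mapsto \begin{pmatrix}1&x\\0&1\end{pmatrix}\begin{pmatrix}\sqrt y&0\\0&1/\sqrt y\end{pmatrix}\begin{pmatrix}\cos\theta&\sin\theta\\-\sin\theta&\cos\theta\end{pmatrix}$, with the metric $\langle\,,\rangle=\frac{dx^2+dy^2}{4y^2}+\left(d\theta+\frac{dx}{2y}\right)^2$. Orthonormal frame: $e_1=2y\partial_x-\partial_\theta$, $e_2=2y\partial_y$, $e_3=\partial_\theta$; $W=\frac{1}{2y}\big(\frac12(x^2-y^2)e_1+xye_2+\frac12(x^2-y^2)e_3\big)$. A surface with unit normal $N$ and mean curvature $H$ (average of principal curvatures w.r.t. $N$) is a $W$-translator if $H=\langle N,W\rangle$. Rotational surfaces are those parametrized as $(s,t)\mapsto(x(s),y(s),t)$ with generating curve $(x(s),y(s))$; when $x'=2y\cos\varphi$, $y'=2y\sin\varphi$ (arclength parametrization in the hyperbolic plane $\frac{dx^2+dy^2}{4y^2}$), $N=-\sin\varphi\,e_1+\cos\varphi\,e_2$ and $H=\frac{\varphi'}{2}+\cos\varphi$. *)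

theory Defs
  imports "HOL-Analysis.Analysis"
begin

text \<open>Tangent vectors of SL(2,R) are recorded by their coefficients (a1,a2,a3)
w.r.t. the orthonormal frame e1 = 2y d/dx - d/dtheta, e2 = 2y d/dy, e3 = d/dtheta.\<close>

definition frame_inner :: "real \<times> real \<times> real \<Rightarrow> real \<times> real \<times> real \<Rightarrow> real" where
  "frame_inner u v = fst u * fst v + fst (snd u) * fst (snd v) + snd (snd u) * snd (snd v)"

text \<open>W = 1/(2y) ( 1/2 (x^2-y^2) e1 + x y e2 + 1/2 (x^2-y^2) e3 )
  = 1/2 (x^2-y^2) d/dx + x y d/dy, at the point (x,y,theta).\<close>
definition W_field :: "real \<Rightarrow> real \<Rightarrow> real \<times> real \<times> real" where
  "W_field x y = ((1 / (2*y)) * ((x^2 - y^2) / 2), (1 / (2*y)) * (x*y), (1 / (2*y)) * ((x^2 - y^2) / 2))"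

text \<open>Unit normal of the rotational surface (s,t) -> (x(s),y(s),t): N = - sin phi e1 + cos phi e2.\<close>
definition rot_normal :: "real \<Rightarrow> real \<times> real \<times> real" where
  "rot_normal \<phi> = (- sin \<phi>, cos \<phi>, 0)"

definition rot_mean_curv :: "real \<Rightarrow> real \<Rightarrow> real" where
  "rot_mean_curv \<phi> \<phi>' = \<phi>' / 2 + cos \<phi>"

text \<open>A rotational surface whose generating curve (x(s),y(s)), s in the open interval (a,b),
is parametrized by hyperbolic arclength with angle function phi:
x' = 2y cos phi, y' = 2y sin phi, y > 0, phi differentiable with derivative phi'.\<close>
definition rot_surface ::
  "real \<Rightarrow> real \<Rightarrow> (real \<Rightarrow> real) \<Rightarrow> (real \<Rightarrow> real) \<Rightarrow> (real \<Rightarrow> real) \<Rightarrow> (real \<Rightarrow> real) \<Rightarrow> bool" where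
  "rot_surface a b x y \<phi> \<phi>' \<longleftrightarrow> a < b \<and>
     (\<forall>s\<in>{a<..<b}. y s > 0 \<and>
        (x has_real_derivative (2 * y s * cos (\<phi> s))) (at s) \<and>
        (y has_real_derivative (2 * y s * sin (\<phi> s))) (at s) \<and>
        (\<phi> has_real_derivative \<phi>' s) (at s))"

definition rot_W_translator ::
  "real \<Rightarrow> real \<Rightarrow> (real \<Rightarrow> real) \<Rightarrow> (real \<Rightarrow> real) \<Rightarrow> (real \<Rightarrow> real) \<Rightarrow> (real \<Rightarrow> real) \<Rightarrow> bool" where
  "rot_W_translator a b x y \<phi> \<phi>' \<longleftrightarrow> rot_surface a b x y \<phi> \<phi>' \<and>
     (\<forall>s\<in>{a<..<b}. rot_mean_curv (\<phi> s) (\<phi>' s) = frame_inner (rot_normal (\<phi> s)) (W_field (x s) (y s)))"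

end

theory Submission
  imports Defs
begin

text \<open>Let r be the hyperbolic length of the projection of W to the hyperbolic plane, and
g its component along the unit tangent of the generating curve, so that
\<open>\<langle>N,W\<rangle>\<^sup>2 + g\<^sup>2 = r\<^sup>2\<close>. Along any rotational surface \<open>r' = 2\<langle>N,W\<rangle>\<close> and
\<open>\<langle>N,W\<rangle>' = 2 (r - H g)\<close>. If the surface is a W-translator with constant mean curvature c,
then \<open>\<langle>N,W\<rangle> = c\<close>, so \<open>r' = 2c\<close> and \<open>c g = r\<close>, whence \<open>r\<^sup>2 (c\<^sup>2 - 1) = c\<^sup>4\<close>.
Differentiating this identity gives \<open>c (c\<^sup>2 - 1) = 0\<close>, and since \<open>r > 0\<close> neither
alternative is compatible with it.\<close>

text \<open>In the coordinates \<open>z = x + i y\<close> of the hyperbolic plane the projection of W is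
\<open>z\<^sup>2/2 \<partial>\<^sub>z\<close>, whose length is \<open>W_norm\<close>; \<open>W_normal\<close> and \<open>W_tangential\<close> are its components
along \<open>N\<close> and along the unit tangent of a curve with angle function \<open>\<phi>\<close>.\<close>

definition W_norm :: "real \<Rightarrow> real \<Rightarrow> real" where
  "W_norm x y = (x\<^sup>2 + y\<^sup>2) / (4 * y)"

definition W_normal :: "real \<Rightarrow> real \<Rightarrow> real \<Rightarrow> real" where
  "W_normal x y \<phi> = x / 2 * cos \<phi> - (x\<^sup>2 - y\<^sup>2) / (4 * y) * sin \<phi>"

definition W_tangential :: "real \<Rightarrow> real \<Rightarrow> real \<Rightarrow> real" where
  "W_tangential x y \<phi> = (x\<^sup>2 - y\<^sup>2) / (4 * y) * cos \<phi> + x / 2 * sin \<phi>"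

lemma W_norm_pos: "y > 0 \<Longrightarrow> W_norm x y > 0"
  unfolding W_norm_def by (simp add: add_nonneg_pos)

lemma frame_inner_rot_normal_W_field:
  "y \<noteq> 0 \<Longrightarrow> frame_inner (rot_normal \<phi>) (W_field x y) = W_normal x y \<phi>"
  unfolding frame_inner_def rot_normal_def W_field_def W_normal_def
  by (simp add: field_simps power2_eq_square)

lemma W_normal_sq_add_W_tangential_sq:
  assumes "y \<noteq> 0"
  shows "(W_normal x y \<phi>)\<^sup>2 + (W_tangential x y \<phi>)\<^sup>2 = (W_norm x y)\<^sup>2"
proof -
  have "(v * C - u * S)\<^sup>2 + (u * C + v * S)\<^sup>2 = (u\<^sup>2 + v\<^sup>2) * (S\<^sup>2 + C\<^sup>2)" for u v C S :: real
    by algebra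
  then have "(W_normal x y \<phi>)\<^sup>2 + (W_tangential x y \<phi>)\<^sup>2
      = (((x\<^sup>2 - y\<^sup>2) / (4 * y))\<^sup>2 + (x / 2)\<^sup>2) * ((sin \<phi>)\<^sup>2 + (cos \<phi>)\<^sup>2)"
    unfolding W_normal_def W_tangential_def .
  also have "\<dots> = (W_norm x y)\<^sup>2"
    unfolding W_norm_def using assms by (simp add: field_simps power2_eq_square)
  finally show ?thesis .
qed

context
  fixes x y \<phi> :: "real \<Rightarrow> real" and s :: real
  assumes y_pos: "y s > 0"
    and x_deriv: "(x has_real_derivative 2 * y s * cos (\<phi> s)) (at s)"
    and y_deriv: "(y has_real_derivative 2 * y s * sin (\<phi> s)) (at s)"
begin

lemma has_real_derivative_W_norm:
  "((\<lambda>t. W_norm (x t) (y t)) has_real_derivative 2 * W_normal (x s) (y s) (\<phi> s)) (at s)"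
proof -
  have "((\<lambda>t. W_norm (x t) (y t)) has_real_derivative
      ((2 * x s * (2 * y s * cos (\<phi> s)) + 2 * y s * (2 * y s * sin (\<phi> s))) * (4 * y s)
        - ((x s)\<^sup>2 + (y s)\<^sup>2) * (4 * (2 * y s * sin (\<phi> s)))) / (4 * y s)\<^sup>2) (at s)"
    unfolding W_norm_def using x_deriv y_deriv y_pos
    by (auto intro!: derivative_eq_intros simp: power2_eq_square)
  moreover have "((2 * x s * (2 * y s * cos (\<phi> s)) + 2 * y s * (2 * y s * sin (\<phi> s))) * (4 * y s)
        - ((x s)\<^sup>2 + (y s)\<^sup>2) * (4 * (2 * y s * sin (\<phi> s)))) / (4 * y s)\<^sup>2
      = 2 * W_normal (x s) (y s) (\<phi> s)"
    unfolding W_normal_def using y_pos by (simp add: field_simps power2_eq_square)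
  ultimately show ?thesis by simp
qed

lemma has_real_derivative_W_normal:
  assumes \<phi>_deriv: "(\<phi> has_real_derivative d\<phi>) (at s)"
  shows "((\<lambda>t. W_normal (x t) (y t) (\<phi> t)) has_real_derivative
     2 * W_norm (x s) (y s) - 2 * rot_mean_curv (\<phi> s) d\<phi> * W_tangential (x s) (y s) (\<phi> s)) (at s)"
proof -
  define u where "u = (\<lambda>t. ((x t)\<^sup>2 - (y t)\<^sup>2) / (4 * y t))"
  define r where "r = W_norm (x s) (y s)"
  define C where "C = cos (\<phi> s)"
  define S where "S = sin (\<phi> s)"
  have "(u has_real_derivative
      ((2 * x s * (2 * y s * C) - 2 * y s * (2 * y s * S)) * (4 * y s)
        - ((x s)\<^sup>2 - (y s)\<^sup>2) * (4 * (2 * y s * S))) / (4 * y s)\<^sup>2) (at s)"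
    unfolding u_def C_def S_def using x_deriv y_deriv y_pos
    by (auto intro!: derivative_eq_intros simp: power2_eq_square)
  moreover have "((2 * x s * (2 * y s * C) - 2 * y s * (2 * y s * S)) * (4 * y s)
        - ((x s)\<^sup>2 - (y s)\<^sup>2) * (4 * (2 * y s * S))) / (4 * y s)\<^sup>2 = x s * C - 2 * r * S"
    unfolding r_def W_norm_def using y_pos by (simp add: field_simps power2_eq_square)
  ultimately have u_deriv: "(u has_real_derivative x s * C - 2 * r * S) (at s)"
    by simp
  have "(\<lambda>t. W_normal (x t) (y t) (\<phi> t)) = (\<lambda>t. x t / 2 * cos (\<phi> t) - u t * sin (\<phi> t))"
    unfolding W_normal_def u_def by simp
  moreover have "((\<lambda>t. x t / 2 * cos (\<phi> t) - u t * sin (\<phi> t)) has_real_derivative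
      2 * y s * C / 2 * C - x s / 2 * (S * d\<phi>) - ((x s * C - 2 * r * S) * S + u s * (C * d\<phi>))) (at s)"
    using x_deriv u_deriv \<phi>_deriv unfolding C_def S_def
    by (auto intro!: derivative_eq_intros)
  ultimately have "((\<lambda>t. W_normal (x t) (y t) (\<phi> t)) has_real_derivative
      2 * y s * C / 2 * C - x s / 2 * (S * d\<phi>) - ((x s * C - 2 * r * S) * S + u s * (C * d\<phi>))) (at s)"
    by simp
  moreover have "2 * y s * C / 2 * C - x s / 2 * (S * d\<phi>) - ((x s * C - 2 * r * S) * S + u s * (C * d\<phi>))
      = 2 * r - 2 * rot_mean_curv (\<phi> s) d\<phi> * (u s * C + x s / 2 * S)"
  proof -
    have "2 * r = y s + 2 * u s"
      unfolding r_def u_def W_norm_def using y_pos by (simp add: field_simps power2_eq_square)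
    moreover have "S\<^sup>2 + C\<^sup>2 = 1"
      unfolding S_def C_def by simp
    ultimately show ?thesis
      unfolding rot_mean_curv_def C_def[symmetric] by algebra
  qed
  moreover have "W_tangential (x s) (y s) (\<phi> s) = u s * C + x s / 2 * S"
    unfolding W_tangential_def u_def C_def S_def ..
  ultimately show ?thesis
    unfolding r_def by simp
qed

end

lemma has_real_derivative_eq_0_if_constant_on_open:
  assumes "(f has_real_derivative D) (at s)" and "open S" "s \<in> S" "\<And>t. t \<in> S \<Longrightarrow> f t = k"
  shows "D = 0"
proof -
  have "((\<lambda>_. k) has_real_derivative D) (at s)"
    using has_field_derivative_transform_within_open[OF assms(1-3)] assms(4) by simp
  then show ?thesis
    using DERIV_const DERIV_unique by blast
qed

lemma rot_W_translator_constant_mean_curv: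
  assumes translator: "rot_W_translator a b x y \<phi> \<phi>'"
    and H_const: "\<forall>t\<in>{a<..<b}. rot_mean_curv (\<phi> t) (\<phi>' t) = c"
    and s: "s \<in> {a<..<b}"
  shows "(W_norm (x s) (y s))\<^sup>2 * (c\<^sup>2 - 1) = c ^ 4"
    and "((\<lambda>t. W_norm (x t) (y t)) has_real_derivative 2 * c) (at s)"
proof -
  have curve: "y t > 0 \<and> (x has_real_derivative 2 * y t * cos (\<phi> t)) (at t)
      \<and> (y has_real_derivative 2 * y t * sin (\<phi> t)) (at t) \<and> (\<phi> has_real_derivative \<phi>' t) (at t)"
    if "t \<in> {a<..<b}" for t
    using translator that unfolding rot_W_translator_def rot_surface_def by blast
  have normal_eq: "W_normal (x t) (y t) (\<phi> t) = c" if "t \<in> {a<..<b}" for t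
    using translator that H_const curve[OF that]
    unfolding rot_W_translator_def by (simp add: frame_inner_rot_normal_W_field)
  note curve_s = curve[OF s]
  have "((\<lambda>t. W_normal (x t) (y t) (\<phi> t)) has_real_derivative
      2 * W_norm (x s) (y s) - 2 * c * W_tangential (x s) (y s) (\<phi> s)) (at s)"
    using has_real_derivative_W_normal[of y s x \<phi> "\<phi>' s"] curve_s H_const s by simp
  then have "2 * W_norm (x s) (y s) - 2 * c * W_tangential (x s) (y s) (\<phi> s) = 0"
    by (rule has_real_derivative_eq_0_if_constant_on_open[OF _ open_greaterThanLessThan s normal_eq])
  then have "c\<^sup>2 * (W_tangential (x s) (y s) (\<phi> s))\<^sup>2 = (W_norm (x s) (y s))\<^sup>2"
    by (simp add: power_mult_distrib[symmetric])
  moreover have "c\<^sup>2 + (W_tangential (x s) (y s) (\<phi> s))\<^sup>2 = (W_norm (x s) (y s))\<^sup>2"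
    using W_normal_sq_add_W_tangential_sq[of "y s" "x s" "\<phi> s"] normal_eq[OF s] curve_s by simp
  ultimately show "(W_norm (x s) (y s))\<^sup>2 * (c\<^sup>2 - 1) = c ^ 4"
    by algebra
  show "((\<lambda>t. W_norm (x t) (y t)) has_real_derivative 2 * c) (at s)"
    using has_real_derivative_W_norm[of y s x \<phi>] curve_s normal_eq[OF s] by simp
qed

theorem mainTheorem6:
  fixes a b :: real and x y \<phi> \<phi>' :: "real \<Rightarrow> real"
  assumes "rot_W_translator a b x y \<phi> \<phi>'"
  shows "\<not> (\<exists>c. \<forall>s\<in>{a<..<b}. rot_mean_curv (\<phi> s) (\<phi>' s) = c)"
proof
  assume "\<exists>c. \<forall>s\<in>{a<..<b}. rot_mean_curv (\<phi> s) (\<phi>' s) = c"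
  then obtain c where H_const: "\<forall>s\<in>{a<..<b}. rot_mean_curv (\<phi> s) (\<phi>' s) = c" ..
  define r where "r = (\<lambda>t. W_norm (x t) (y t))"
  define s where "s = (a + b) / 2"
  have "a < b" and "\<forall>t\<in>{a<..<b}. y t > 0"
    using assms unfolding rot_W_translator_def rot_surface_def by auto
  then have s_in: "s \<in> {a<..<b}" and r_pos: "r s > 0"
    unfolding s_def r_def by (auto intro: W_norm_pos)
  note identity = rot_W_translator_constant_mean_curv[OF assms H_const]
  have "((\<lambda>t. (r t)\<^sup>2 * (c\<^sup>2 - 1)) has_real_derivative 2 * r s * (2 * c) * (c\<^sup>2 - 1)) (at s)"
    using identity(2)[OF s_in] unfolding r_def by (auto intro!: derivative_eq_intros)
  then have "2 * r s * (2 * c) * (c\<^sup>2 - 1) = 0"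
    by (rule has_real_derivative_eq_0_if_constant_on_open[OF _ open_greaterThanLessThan s_in])
      (use identity(1) in \<open>simp add: r_def\<close>)
  then have "c = 0 \<or> c\<^sup>2 = 1"
    using r_pos by simp
  then show False
    using identity(1)[OF s_in] r_pos unfolding r_def by auto
qed

end
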